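(* For every admissible sequence of bins $\sigma$ and all integers $s',\ell'\ge0$, $R(\sigma,s',0)=\mathrm{OPT}(\sigma,s',0)$ and $R(\sigma,0,\ell')=\mathrm{OPT}(\sigma,0,\ell')$.
   Context: Fix an integer $S>1$, $L=2S-1$, $M=4S-3$. Bins have integer sizes in $[S,M]$ and arrive in a sequence $\sigma$, admissible if it ends with at least as many bins of size $M$ as there are items under consideration. A packing assigns every item to a bin with total item size in each bin at most the bin size; its cost is the sum of the sizes of bins receiving at least one item. A packing is valid if each empty bin is smaller than every item packed in a later bin. A bin is wasteful if its empty space is at least the size of some item packed in a later bin; a packing is thrifty if no bin is wasteful. A partial packing of a finite sequence of bins is reasonable if every bin $b$ of that sequence contains: one item of size $S$ if $\mathrm{size}(b)\in[S,L-1]$; one item of size $L$ if $\mathrm{size}(b)=L$; two items of size $S$ or one item of size $L$ if $\mathrm{size}(b)\in[L+1,L+S-1]$; one item of size $S$ and one of size $L$ if $\mathrm{size}(b)=L+S$; three items of size $S$ or one item of size $S$ and one of size $L$ if $\mathrm{size}(b)\in[L+S+1,2L-1]$. The key bin of a packing is the first bin after which no item of size $L$ remains unpacked or at most two items of size $S$ remain unpacked; the front is the restriction of the packing to the prefix ending with the key bin. A packing is reasonable if it is thrifty and its front is reasonable. $\mathrm{OPT}(\sigma,s,\ell)$ is the minimum cost of a valid packing of $s$ items of size $S$ and $\ell$ items of size $L$ into $\sigma$; $R(\sigma,s,\ell)$ is the maximum cost of a reasonable packing of these items into $\sigma$. *)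

theory Defs
  imports Main
begin

text \<open>The integer S > 1 is passed explicitly as parameter S.
  Bin sequences are lists of bin sizes; items are given as a list of item sizes,
  and a packing is a map from item indices to bin indices.\<close>

definition Lsz :: "nat \<Rightarrow> nat" where "Lsz S = 2 * S - 1"
definition Msz :: "nat \<Rightarrow> nat" where "Msz S = 4 * S - 3"

definition items :: "nat \<Rightarrow> nat \<Rightarrow> nat \<Rightarrow> nat list" where
  "items S s l = replicate s S @ replicate l (Lsz S)"

definition admissible :: "nat \<Rightarrow> nat list \<Rightarrow> nat \<Rightarrow> bool" where
  "admissible S \<sigma> n \<longleftrightarrow>
     (\<forall>b\<in>set \<sigma>. S \<le> b \<and> b \<le> Msz S) \<and>
     n \<le> length \<sigma> \<and> (\<forall>j. length \<sigma> - n \<le> j \<and> j < length \<sigma> \<longrightarrow> \<sigma> ! j = Msz S)"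

definition load :: "nat list \<Rightarrow> (nat \<Rightarrow> nat) \<Rightarrow> nat \<Rightarrow> nat" where
  "load its p j = (\<Sum>i\<in>{i. i < length its \<and> p i = j}. its ! i)"

definition used :: "nat list \<Rightarrow> (nat \<Rightarrow> nat) \<Rightarrow> nat \<Rightarrow> bool" where
  "used its p j \<longleftrightarrow> (\<exists>i < length its. p i = j)"

definition is_packing :: "nat list \<Rightarrow> nat list \<Rightarrow> (nat \<Rightarrow> nat) \<Rightarrow> bool" where
  "is_packing \<sigma> its p \<longleftrightarrow>
     (\<forall>i < length its. p i < length \<sigma>) \<and> (\<forall>j < length \<sigma>. load its p j \<le> \<sigma> ! j)"

definition cost :: "nat list \<Rightarrow> nat list \<Rightarrow> (nat \<Rightarrow> nat) \<Rightarrow> nat" where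
  "cost \<sigma> its p = (\<Sum>j\<in>{j. j < length \<sigma> \<and> used its p j}. \<sigma> ! j)"

definition valid :: "nat list \<Rightarrow> nat list \<Rightarrow> (nat \<Rightarrow> nat) \<Rightarrow> bool" where
  "valid \<sigma> its p \<longleftrightarrow> is_packing \<sigma> its p \<and>
     (\<forall>j < length \<sigma>. \<not> used its p j \<longrightarrow>
        (\<forall>i < length its. j < p i \<longrightarrow> \<sigma> ! j < its ! i))"

definition wasteful :: "nat list \<Rightarrow> nat list \<Rightarrow> (nat \<Rightarrow> nat) \<Rightarrow> nat \<Rightarrow> bool" where
  "wasteful \<sigma> its p j \<longleftrightarrow>
     (\<exists>i < length its. j < p i \<and> its ! i \<le> \<sigma> ! j - load its p j)"

definition thrifty :: "nat list \<Rightarrow> nat list \<Rightarrow> (nat \<Rightarrow> nat) \<Rightarrow> bool" where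
  "thrifty \<sigma> its p \<longleftrightarrow> is_packing \<sigma> its p \<and> (\<forall>j < length \<sigma>. \<not> wasteful \<sigma> its p j)"

definition cnt :: "nat list \<Rightarrow> (nat \<Rightarrow> nat) \<Rightarrow> nat \<Rightarrow> nat \<Rightarrow> nat" where
  "cnt its p sz j = card {i. i < length its \<and> p i = j \<and> its ! i = sz}"

definition bin_reasonable :: "nat \<Rightarrow> nat \<Rightarrow> nat \<Rightarrow> nat \<Rightarrow> bool" where
  "bin_reasonable S b a c \<longleftrightarrow>
     (S \<le> b \<and> b \<le> Lsz S - 1 \<and> a = 1 \<and> c = 0) \<or>
     (b = Lsz S \<and> a = 0 \<and> c = 1) \<or>
     (Lsz S + 1 \<le> b \<and> b \<le> Lsz S + S - 1 \<and> ((a = 2 \<and> c = 0) \<or> (a = 0 \<and> c = 1))) \<or>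
     (b = Lsz S + S \<and> a = 1 \<and> c = 1) \<or>
     (Lsz S + S + 1 \<le> b \<and> b \<le> 2 * Lsz S - 1 \<and> ((a = 3 \<and> c = 0) \<or> (a = 1 \<and> c = 1)))"

definition key_cond :: "nat \<Rightarrow> nat list \<Rightarrow> (nat \<Rightarrow> nat) \<Rightarrow> nat \<Rightarrow> bool" where
  "key_cond S its p k \<longleftrightarrow>
     (\<forall>i < length its. its ! i = Lsz S \<longrightarrow> p i < k) \<or>
     card {i. i < length its \<and> its ! i = S \<and> k \<le> p i} \<le> 2"

definition front_len :: "nat \<Rightarrow> nat list \<Rightarrow> nat list \<Rightarrow> (nat \<Rightarrow> nat) \<Rightarrow> nat" where
  "front_len S \<sigma> its p = (LEAST k. k \<le> length \<sigma> \<and> key_cond S its p k)"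

definition reasonable :: "nat \<Rightarrow> nat list \<Rightarrow> nat list \<Rightarrow> (nat \<Rightarrow> nat) \<Rightarrow> bool" where
  "reasonable S \<sigma> its p \<longleftrightarrow> thrifty \<sigma> its p \<and>
     (\<forall>j < front_len S \<sigma> its p.
        bin_reasonable S (\<sigma> ! j) (cnt its p S j) (cnt its p (Lsz S) j))"

definition OPT :: "nat \<Rightarrow> nat list \<Rightarrow> nat \<Rightarrow> nat \<Rightarrow> nat" where
  "OPT S \<sigma> s l = Min {cost \<sigma> (items S s l) p | p. valid \<sigma> (items S s l) p}"

definition R :: "nat \<Rightarrow> nat list \<Rightarrow> nat \<Rightarrow> nat \<Rightarrow> nat" where
  "R S \<sigma> s l = Max {cost \<sigma> (items S s l) p | p. reasonable S \<sigma> (items S s l) p}"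

end

theory Submission
  imports Defs
begin

text \<open>When all items have the same size w, the key condition already holds before the
  first bin (there are no items of size L, or none of size S), so the front is empty and
  reasonable means thrifty. A thrifty packing of equal items fills every bin preceding its
  last used bin with exactly \<open>b div w\<close> items. Hence a valid packing that skipped a bin
  used by a thrifty one would have to fit all n items into the earlier bins, which hold
  fewer than n: every valid packing uses all bins of every thrifty packing. Thrifty packings
  are valid and exist (pack greedily), so all of them have cost equal to the optimum.\<close>

lemma load_replicate: "load (replicate n w) p j = w * card {i. i < n \<and> p i = j}"
proof -
  have "(\<Sum>i\<in>{i. i < length (replicate n w) \<and> p i = j}. replicate n w ! i)
        = (\<Sum>i\<in>{i. i < n \<and> p i = j}. w)" by (rule sum.cong) auto
  then show ?thesis unfolding load_def by simp
qed

lemma card_packed_before: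
  "card {i. i < n \<and> p i < j} = (\<Sum>t<j. card {i. i < (n::nat) \<and> (p i :: nat) = t})"
proof (induction j)
  case 0
  then show ?case by simp
next
  case (Suc j)
  have "{i. i < n \<and> p i < Suc j} = {i. i < n \<and> p i < j} \<union> {i. i < n \<and> p i = j}" by auto
  moreover have "card ({i. i < n \<and> p i < j} \<union> {i. i < n \<and> p i = j})
      = card {i. i < n \<and> p i < j} + card {i. i < n \<and> p i = j}"
    by (rule card_Un_disjoint) auto
  ultimately show ?case using Suc by simp
qed

lemma packed_count_le_capacity:
  assumes "is_packing \<sigma> (replicate n w) p" "t < length \<sigma>" "0 < w"
  shows "card {i. i < n \<and> p i = t} \<le> \<sigma> ! t div w"
proof -
  have "w * card {i. i < n \<and> p i = t} \<le> \<sigma> ! t"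
    using assms by (simp add: is_packing_def load_replicate)
  then show ?thesis using assms(3) by (simp add: less_eq_div_iff_mult_less_eq mult.commute)
qed

lemma thrifty_packed_count_eq_capacity:
  assumes "thrifty \<sigma> (replicate n w) q" "t < length \<sigma>" "i < n" "t < q i" "0 < w"
  shows "card {i. i < n \<and> q i = t} = \<sigma> ! t div w"
proof -
  let ?c = "card {i. i < n \<and> q i = t}"
  have fits: "w * ?c \<le> \<sigma> ! t"
    using assms by (simp add: thrifty_def is_packing_def load_replicate)
  have "\<not> wasteful \<sigma> (replicate n w) q t" using assms(1,2) by (simp add: thrifty_def)
  then have "\<sigma> ! t < w * Suc ?c" using assms(3,4) fits by (auto simp: wasteful_def load_replicate)
  then show ?thesis using div_nat_eqI fits by (simp add: mult.commute)
qed

lemma thrifty_imp_valid: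
  assumes "thrifty \<sigma> its q"
  shows "valid \<sigma> its q"
  unfolding valid_def
proof (intro conjI allI impI)
  show "is_packing \<sigma> its q" using assms by (simp add: thrifty_def)
next
  fix j i
  assume j: "j < length \<sigma>" and unused: "\<not> used its q j" and "i < length its" "j < q i"
  have "{i. i < length its \<and> q i = j} = {}" using unused by (auto simp: used_def)
  then have "load its q j = 0" unfolding load_def by (simp only: sum.empty)
  moreover have "\<not> wasteful \<sigma> its q j" using assms j by (simp add: thrifty_def)
  ultimately show "\<sigma> ! j < its ! i" using \<open>i < length its\<close> \<open>j < q i\<close>
    by (auto simp: wasteful_def)
qed

lemma valid_uses_bins_of_thrifty:
  assumes thrifty: "thrifty \<sigma> (replicate n w) q" and valid: "valid \<sigma> (replicate n w) p"
    and w: "0 < w" and j: "j < length \<sigma>" and i0: "i0 < n" "q i0 = j"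
  shows "\<exists>i<n. p i = j"
proof (rule ccontr)
  assume unused: "\<not> (\<exists>i<n. p i = j)"
  have packing_q: "is_packing \<sigma> (replicate n w) q" and packing_p: "is_packing \<sigma> (replicate n w) p"
    using thrifty valid by (auto simp: thrifty_def valid_def)
  have "{i. i < n \<and> q i = j} \<noteq> {}" using i0 by blast
  then have q_at_j: "1 \<le> card {i. i < n \<and> q i = j}" by (simp add: Suc_le_eq card_gt_0_iff)
  moreover have "card {i. i < n \<and> q i = j} * w \<le> \<sigma> ! j"
    using packed_count_le_capacity[OF packing_q j w] w by (simp add: less_eq_div_iff_mult_less_eq)
  ultimately have "w \<le> \<sigma> ! j" by (metis dual_order.trans mult_1 mult_le_mono1)
  have "p i < j" if "i < n" for i
  proof (rule ccontr)
    assume "\<not> p i < j"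
    then have "j < p i" using unused that by auto
    moreover have "\<not> used (replicate n w) p j" using unused by (simp add: used_def)
    ultimately have "\<sigma> ! j < w" using valid j that by (auto simp: valid_def)
    then show False using \<open>w \<le> \<sigma> ! j\<close> by simp
  qed
  then have "{i. i < n \<and> p i < j} = {..<n}" by auto
  then have "n = card {i. i < n \<and> p i < j}" by simp
  also have "\<dots> = (\<Sum>t<j. card {i. i < n \<and> p i = t})" by (rule card_packed_before)
  also have "\<dots> \<le> (\<Sum>t<j. \<sigma> ! t div w)"
    by (rule sum_mono) (use packed_count_le_capacity[OF packing_p _ w] j in auto)
  also have "\<dots> = (\<Sum>t<j. card {i. i < n \<and> q i = t})"
    by (rule sum.cong) (use thrifty_packed_count_eq_capacity[OF thrifty _ i0(1) _ w] j i0 in auto)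
  finally have "n < (\<Sum>t<Suc j. card {i. i < n \<and> q i = t})" using q_at_j by simp
  also have "\<dots> = card {i. i < n \<and> q i < Suc j}" by (rule card_packed_before[symmetric])
  also have "\<dots> \<le> card {..<n}" by (rule card_mono) auto
  finally show False by simp
qed

lemma cost_thrifty_le_cost_valid:
  assumes "thrifty \<sigma> (replicate n w) q" "valid \<sigma> (replicate n w) p" "0 < w"
  shows "cost \<sigma> (replicate n w) q \<le> cost \<sigma> (replicate n w) p"
  unfolding cost_def
  by (rule sum_mono2) (use valid_uses_bins_of_thrifty[OF assms] in \<open>auto simp: used_def\<close>)

definition slots :: "nat list \<Rightarrow> nat \<Rightarrow> nat \<Rightarrow> nat" where
  "slots \<sigma> w j = (\<Sum>t<j. \<sigma> ! t div w)"

definition greedy_bin :: "nat list \<Rightarrow> nat \<Rightarrow> nat \<Rightarrow> nat" where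
  "greedy_bin \<sigma> w i = (LEAST t. i < slots \<sigma> w (Suc t))"

lemma slots_mono: "a \<le> b \<Longrightarrow> slots \<sigma> w a \<le> slots \<sigma> w b"
  unfolding slots_def by (rule sum_mono2) auto

lemma slots_Suc: "slots \<sigma> w (Suc t) = slots \<sigma> w t + \<sigma> ! t div w"
  by (simp add: slots_def)

lemma greedy_bin_eqI:
  assumes "slots \<sigma> w t \<le> i" "i < slots \<sigma> w (Suc t)"
  shows "greedy_bin \<sigma> w i = t"
  unfolding greedy_bin_def
proof (rule Least_equality)
  fix u assume "i < slots \<sigma> w (Suc u)"
  then show "t \<le> u" using assms(1) slots_mono[of "Suc u" t \<sigma> w] by (cases "u < t") auto
qed (fact assms(2))

lemma greedy_bin_bounds:
  assumes "i < slots \<sigma> w (length \<sigma>)"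
  shows "slots \<sigma> w (greedy_bin \<sigma> w i) \<le> i" "i < slots \<sigma> w (Suc (greedy_bin \<sigma> w i))"
    and "greedy_bin \<sigma> w i < length \<sigma>"
proof -
  have "i < slots \<sigma> w (Suc (length \<sigma>))"
    using assms slots_mono[of "length \<sigma>" "Suc (length \<sigma>)" \<sigma> w] by simp
  then show upper: "i < slots \<sigma> w (Suc (greedy_bin \<sigma> w i))"
    unfolding greedy_bin_def by (rule LeastI)
  show lower: "slots \<sigma> w (greedy_bin \<sigma> w i) \<le> i"
  proof (cases "greedy_bin \<sigma> w i")
    case (Suc u)
    then have "\<not> i < slots \<sigma> w (Suc u)"
      using not_less_Least[of u "\<lambda>t. i < slots \<sigma> w (Suc t)"] by (simp add: greedy_bin_def)
    then show ?thesis using Suc by simp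
  qed (simp add: slots_def)
  show "greedy_bin \<sigma> w i < length \<sigma>"
    using lower assms slots_mono[of "length \<sigma>" "greedy_bin \<sigma> w i" \<sigma> w] by fastforce
qed

lemma greedy_bin_fiber:
  assumes "n \<le> slots \<sigma> w (length \<sigma>)"
  shows "{i. i < n \<and> greedy_bin \<sigma> w i = t} = {slots \<sigma> w t..<min n (slots \<sigma> w (Suc t))}"
  using assms greedy_bin_bounds greedy_bin_eqI by fastforce

lemma thrifty_greedy_bin:
  assumes w: "0 < w" and n: "n \<le> slots \<sigma> w (length \<sigma>)"
  shows "thrifty \<sigma> (replicate n w) (greedy_bin \<sigma> w)"
proof -
  let ?g = "greedy_bin \<sigma> w"
  have count: "card {i. i < n \<and> ?g i = t} = min n (slots \<sigma> w (Suc t)) - slots \<sigma> w t" for t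
    using greedy_bin_fiber[OF n] by simp
  have "is_packing \<sigma> (replicate n w) ?g"
    unfolding is_packing_def
  proof (intro conjI allI impI)
    fix i assume "i < length (replicate n w)"
    then show "?g i < length \<sigma>" using greedy_bin_bounds(3) n by simp
  next
    fix t
    have "card {i. i < n \<and> ?g i = t} \<le> \<sigma> ! t div w"
      using count[of t] slots_Suc[of \<sigma> w t] by linarith
    then have "w * card {i. i < n \<and> ?g i = t} \<le> w * (\<sigma> ! t div w)" by simp
    also have "\<dots> \<le> \<sigma> ! t" by (simp add: mult.commute)
    finally show "load (replicate n w) ?g t \<le> \<sigma> ! t" by (simp add: load_replicate)
  qed
  moreover have "\<not> wasteful \<sigma> (replicate n w) ?g t" for t
  proof
    assume "wasteful \<sigma> (replicate n w) ?g t"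
    then obtain i where i: "i < n" "t < ?g i" "w \<le> \<sigma> ! t - w * card {i. i < n \<and> ?g i = t}"
      by (auto simp: wasteful_def load_replicate)
    have "slots \<sigma> w (Suc t) \<le> i"
      using i(2) slots_mono[of "Suc t" "?g i" \<sigma> w] greedy_bin_bounds(1)[of i \<sigma> w] i(1) n
      by simp
    then have "card {i. i < n \<and> ?g i = t} = \<sigma> ! t div w"
      using count[of t] slots_Suc[of \<sigma> w t] i(1) by simp
    then have "\<sigma> ! t - w * card {i. i < n \<and> ?g i = t} = \<sigma> ! t mod w"
      by (simp add: minus_mult_div_eq_mod)
    then show False using i(3) mod_less_divisor[OF w, of "\<sigma> ! t"] by linarith
  qed
  ultimately show ?thesis by (simp add: thrifty_def)
qed

lemma admissible_imp_le_slots: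
  assumes "admissible S \<sigma> n" "0 < w" "w \<le> Msz S"
  shows "n \<le> slots \<sigma> w (length \<sigma>)"
proof -
  have len: "n \<le> length \<sigma>" and tail: "\<And>j. length \<sigma> - n \<le> j \<Longrightarrow> j < length \<sigma> \<Longrightarrow> \<sigma> ! j = Msz S"
    using assms(1) by (auto simp: admissible_def)
  have "1 \<le> Msz S div w" using assms(2,3) by (simp add: less_eq_div_iff_mult_less_eq)
  then have "n \<le> (\<Sum>t\<in>{length \<sigma> - n..<length \<sigma>}. \<sigma> ! t div w)"
    using sum_mono[of "{length \<sigma> - n..<length \<sigma>}" "\<lambda>_. 1" "\<lambda>t. \<sigma> ! t div w"] len tail by simp
  also have "\<dots> \<le> slots \<sigma> w (length \<sigma>)" unfolding slots_def by (rule sum_mono2) auto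
  finally show ?thesis .
qed

lemma reasonable_replicate_iff_thrifty:
  assumes "1 < S"
  shows "reasonable S \<sigma> (replicate n w) q \<longleftrightarrow> thrifty \<sigma> (replicate n w) q"
proof -
  have "key_cond S (replicate n w) q 0"
  proof (cases "w = S")
    case True
    then have "w \<noteq> Lsz S" using assms by (simp add: Lsz_def)
    then show ?thesis by (simp add: key_cond_def)
  next
    case False
    then have no_S_items: "{i. i < length (replicate n w) \<and> replicate n w ! i = S \<and> 0 \<le> q i} = {}"
      by auto
    show ?thesis unfolding key_cond_def no_S_items by simp
  qed
  then have "front_len S \<sigma> (replicate n w) q = 0"
    unfolding front_len_def by (intro Least_eq_0) simp
  then show ?thesis by (simp add: reasonable_def)
qed

lemma Max_reasonable_eq_Min_valid:
  assumes S: "1 < S" and w: "0 < w" and n: "n \<le> slots \<sigma> w (length \<sigma>)"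
  shows "Max {cost \<sigma> (replicate n w) p | p. reasonable S \<sigma> (replicate n w) p}
       = Min {cost \<sigma> (replicate n w) p | p. valid \<sigma> (replicate n w) p}"
    (is "Max ?R = Min ?V")
proof -
  let ?its = "replicate n w"
  have "cost \<sigma> ?its p \<le> (\<Sum>j<length \<sigma>. \<sigma> ! j)" for p
    unfolding cost_def by (rule sum_mono2) auto
  then have "?R \<subseteq> {..\<Sum>j<length \<sigma>. \<sigma> ! j}" "?V \<subseteq> {..\<Sum>j<length \<sigma>. \<sigma> ! j}" by auto
  then have finite: "finite ?R" "finite ?V" by (auto intro: finite_subset)
  note reasonable_iff = reasonable_replicate_iff_thrifty[OF S]
  have "thrifty \<sigma> ?its (greedy_bin \<sigma> w)" by (rule thrifty_greedy_bin[OF w n])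
  then have "cost \<sigma> ?its (greedy_bin \<sigma> w) \<in> ?R" "cost \<sigma> ?its (greedy_bin \<sigma> w) \<in> ?V"
    using reasonable_iff thrifty_imp_valid by auto
  then have "?R \<noteq> {}" "?V \<noteq> {}" by auto
  obtain q where q: "thrifty \<sigma> ?its q" "Max ?R = cost \<sigma> ?its q"
    using Max_in[OF finite(1) \<open>?R \<noteq> {}\<close>] reasonable_iff by auto
  obtain p where p: "valid \<sigma> ?its p" "Min ?V = cost \<sigma> ?its p"
    using Min_in[OF finite(2) \<open>?V \<noteq> {}\<close>] by auto
  have "Max ?R \<le> Min ?V" using q p cost_thrifty_le_cost_valid[OF q(1) p(1) w] by simp
  moreover have "Min ?V \<le> Max ?R" using Min_le[OF finite(2)] q thrifty_imp_valid by blast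
  ultimately show ?thesis by simp
qed

theorem proposition3:
  fixes S :: nat and \<sigma> :: "nat list" and s' l' :: nat
  assumes "1 < S"
  shows "(admissible S \<sigma> s' \<longrightarrow> R S \<sigma> s' 0 = OPT S \<sigma> s' 0) \<and>
         (admissible S \<sigma> l' \<longrightarrow> R S \<sigma> 0 l' = OPT S \<sigma> 0 l')"
proof -
  have "0 < S" "S \<le> Msz S" "0 < Lsz S" "Lsz S \<le> Msz S"
    using assms by (simp_all add: Lsz_def Msz_def)
  then show ?thesis
    unfolding R_def OPT_def items_def
    using Max_reasonable_eq_Min_valid[OF assms] admissible_imp_le_slots by simp
qed

end
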